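(* For every real $x>0$, $$2^{x-1}<\sum_{i=0}^{\lfloor x\rfloor}\binom{x}{i}\le 2^x.$$
   Context: For real $x$ and integer $i\ge0$, $\binom{x}{i}=x(x-1)\cdots(x-i+1)/i!$. *)

theory Defs
  imports Complex_Main
begin

end

theory Submission
  imports Defs "HOL-Analysis.Generalised_Binomial_Theorem"
begin

text \<open>Write \<open>x = n + t\<close> with \<open>n = \<lfloor>x\<rfloor>\<close> and \<open>0 \<le> t < 1\<close>. Pascal's rule turns the truncated
  sum into \<open>2^n * (\<Sum>k=0..n. ((t + k - 1) gchoose k) / 2^k)\<close>, a partial sum of the negative
  binomial series for \<open>(1 - 1/2) powr (-t) = 2 powr t\<close>. Its terms are nonnegative and the first
  one is 1, so the partial sum lies between 1 and \<open>2 powr t\<close>; finally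
  \<open>2 powr (x - 1) < 2^n \<le> 2^n * 2 powr t = 2 powr x\<close>.\<close>

lemma gbinomial_partial_sum_Suc:
  fixes a :: "'a :: field_char_0"
  shows "(\<Sum>i = 0..Suc n. (a + 1) gchoose i)
        = 2 * (\<Sum>i = 0..n. a gchoose i) + (a gchoose Suc n)"
proof -
  have "(\<Sum>i = 0..Suc n. (a + 1) gchoose i) = 1 + (\<Sum>i = 0..n. (a + 1) gchoose Suc i)"
    by (subst sum.atLeast0_atMost_Suc_shift) simp
  also have "\<dots> = 1 + (\<Sum>i = 0..n. a gchoose i) + (\<Sum>i = 0..n. a gchoose Suc i)"
    by (simp add: gbinomial_Suc_Suc sum.distrib)
  also have "(\<Sum>i = 0..n. a gchoose Suc i) = (\<Sum>i = 0..Suc n. a gchoose i) - 1"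
    by (subst sum.atLeast0_atMost_Suc_shift) simp
  also have "(\<Sum>i = 0..Suc n. a gchoose i) = (\<Sum>i = 0..n. a gchoose i) + (a gchoose Suc n)"
    by simp
  finally show ?thesis
    by simp
qed

lemma gbinomial_partial_sum_eq:
  fixes t :: "'a :: field_char_0"
  shows "(\<Sum>i = 0..m. (of_nat m + t) gchoose i)
        = 2 ^ m * (\<Sum>k = 0..m. ((t + of_nat k - 1) gchoose k) / 2 ^ k)"
proof (induction m)
  case 0
  then show ?case
    by simp
next
  case (Suc m)
  have "(\<Sum>i = 0..Suc m. (of_nat (Suc m) + t) gchoose i)
        = (\<Sum>i = 0..Suc m. ((of_nat m + t) + 1) gchoose i)"
    by (simp add: algebra_simps)
  also have "\<dots> = 2 * (\<Sum>i = 0..m. (of_nat m + t) gchoose i) + ((of_nat m + t) gchoose Suc m)"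
    by (rule gbinomial_partial_sum_Suc)
  also have "(of_nat m + t) gchoose Suc m
             = 2 ^ Suc m * (((t + of_nat (Suc m) - 1) gchoose Suc m) / 2 ^ Suc m)"
    by (simp add: algebra_simps)
  finally show ?case
    using Suc by (simp add: algebra_simps)
qed

lemma gbinomial_rising_nonneg:
  fixes t :: real
  assumes "t \<ge> 0"
  shows "(t + real k - 1) gchoose k \<ge> 0"
  using assms by (simp add: gbinomial_pochhammer' pochhammer_prod prod_nonneg)

lemma negative_binomial_series:
  fixes t z :: real
  assumes "\<bar>z\<bar> < 1"
  shows "(\<lambda>k. ((t + real k - 1) gchoose k) * z ^ k) sums ((1 - z) powr (- t))"
proof -
  have "((t + real k - 1) gchoose k) * z ^ k = ((- t) gchoose k) * (- z) ^ k" for k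
  proof -
    have "(- 1) ^ k * (- z) ^ k = z ^ k"
      by (simp add: power_mult_distrib[symmetric])
    then show ?thesis
      by (simp add: gbinomial_negated_upper[of "- t"] add.commute mult.assoc)
  qed
  moreover have "(\<lambda>k. ((- t) gchoose k) * (- z) ^ k) sums ((1 + - z) powr (- t))"
    by (rule gen_binomial_real) (use assms in simp)
  ultimately show ?thesis
    by simp
qed

lemma negative_binomial_half_partial_sum_bounds:
  fixes t :: real
  assumes "t \<ge> 0"
  shows "1 \<le> (\<Sum>k = 0..n. ((t + real k - 1) gchoose k) / 2 ^ k)"
    and "(\<Sum>k = 0..n. ((t + real k - 1) gchoose k) / 2 ^ k) \<le> 2 powr t"
proof -
  define u where "u k = ((t + real k - 1) gchoose k) / 2 ^ k" for k
  have u_nonneg: "u k \<ge> 0" for k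
    using gbinomial_rising_nonneg[OF assms] by (simp add: u_def)
  have "(\<Sum>k = 0..n. u k) = u 0 + (\<Sum>k = 1..n. u k)"
    by (simp add: sum.atLeast_Suc_atMost)
  moreover have "(\<Sum>k = 1..n. u k) \<ge> 0"
    by (simp add: sum_nonneg u_nonneg)
  ultimately show "1 \<le> (\<Sum>k = 0..n. ((t + real k - 1) gchoose k) / 2 ^ k)"
    by (simp add: u_def)
  have "u sums ((1 - 1 / 2) powr (- t))"
    using negative_binomial_series[of "1 / 2" t] unfolding u_def by (simp add: power_one_over)
  then have u_sums: "u sums (2 powr t)"
    by (simp add: powr_minus_divide powr_divide)
  then have "sum u {0..n} \<le> 2 powr t"
    using sum_le_suminf[of u "{0..n}"] u_nonneg by (auto simp: sums_iff)
  then show "(\<Sum>k = 0..n. ((t + real k - 1) gchoose k) / 2 ^ k) \<le> 2 powr t"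
    by (simp add: u_def)
qed

theorem claimA2:
  fixes x :: real
  assumes "x > 0"
  shows "2 powr (x - 1) < (\<Sum>i = 0..nat \<lfloor>x\<rfloor>. x gchoose i)
         \<and> (\<Sum>i = 0..nat \<lfloor>x\<rfloor>. x gchoose i) \<le> 2 powr x"
proof -
  define n where "n = nat \<lfloor>x\<rfloor>"
  define t where "t = x - real n"
  define P where "P = (\<Sum>k = 0..n. ((t + real k - 1) gchoose k) / 2 ^ k)"
  have t_nonneg: "t \<ge> 0" and t_less_1: "t < 1"
    using assms unfolding t_def n_def by linarith+
  have x_eq: "x = real n + t"
    by (simp add: t_def)
  have sum_eq: "(\<Sum>i = 0..n. x gchoose i) = 2 ^ n * P"
    unfolding x_eq P_def by (rule gbinomial_partial_sum_eq)
  have "2 powr (x - 1) < 2 ^ n"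
    using t_less_1 by (simp add: x_eq powr_realpow [symmetric])
  also have "\<dots> \<le> 2 ^ n * P"
    using negative_binomial_half_partial_sum_bounds(1)[OF t_nonneg] by (simp add: P_def)
  finally have lower: "2 powr (x - 1) < 2 ^ n * P" .
  have "2 ^ n * P \<le> 2 ^ n * 2 powr t"
    using negative_binomial_half_partial_sum_bounds(2)[OF t_nonneg] by (simp add: P_def)
  also have "\<dots> = 2 powr x"
    by (simp add: x_eq powr_add powr_realpow)
  finally have upper: "2 ^ n * P \<le> 2 powr x" .
  show ?thesis
    unfolding n_def [symmetric] sum_eq using lower upper ..
qed

end
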